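(* If the filtered vector space $(V,\ell)$ satisfies the best approximation property, then every subspace $W\le V$ has an $\ell$-orthogonal complement, i.e. a subspace $X\le V$ with $W\oplus X=V$ and $\ell(w+x)=\max\{\ell(w),\ell(x)\}$ for all $w\in W$, $x\in X$.
   Context: A filtered vector space over a field $\kappa$ is a pair $(V,\ell)$ with $V$ a $\kappa$-vector space and $\ell\colon V\to\mathbb{R}\cup\{-\infty\}$ such that $\ell(v)=-\infty$ iff $v=0$, $\ell(cv)=\ell(v)$ for $c\in\kappa\setminus\{0\}$, and $\ell(v+w)\le\max\{\ell(v),\ell(w)\}$. $(V,\ell)$ satisfies the best approximation property if for every proper subspace $W\subsetneq V$ and every $v\in V\setminus W$ there is $w_0\in W$ with $\ell(v-w_0)\le\ell(v-w)$ for all $w\in W$. *)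

theory Defs
  imports Main "HOL-Library.Extended_Real"
begin

definition filtered_vector_space ::
  "('k::field \<Rightarrow> 'v::ab_group_add \<Rightarrow> 'v) \<Rightarrow> ('v \<Rightarrow> ereal) \<Rightarrow> bool" where
  "filtered_vector_space scale ell \<longleftrightarrow>
     vector_space scale \<and>
     (\<forall>v. ell v \<noteq> \<infinity>) \<and>
     (\<forall>v. ell v = - \<infinity> \<longleftrightarrow> v = 0) \<and>
     (\<forall>c v. c \<noteq> 0 \<longrightarrow> ell (scale c v) = ell v) \<and>
     (\<forall>v w. ell (v + w) \<le> max (ell v) (ell w))"

definition best_approximation_property ::
  "('k::field \<Rightarrow> 'v::ab_group_add \<Rightarrow> 'v) \<Rightarrow> ('v \<Rightarrow> ereal) \<Rightarrow> bool" where
  "best_approximation_property scale ell \<longleftrightarrow>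
     (\<forall>W v. module.subspace scale W \<and> W \<noteq> UNIV \<and> v \<notin> W \<longrightarrow>
        (\<exists>w0\<in>W. \<forall>w\<in>W. ell (v - w0) \<le> ell (v - w)))"

end

theory Submission
  imports Defs
begin

text \<open>By Zorn's lemma there is a subspace M, maximal among those \<open>\<ell>\<close>-orthogonal to W.
  If W + M were proper, the best approximation property would give a vector y outside W + M
  whose distance to W + M is attained at 0, and such a y is \<open>\<ell>\<close>-orthogonal to W + M; then
  M + span {y} would still be \<open>\<ell>\<close>-orthogonal to W, contradicting maximality. Orthogonality
  forces W \<inter> M = {0}, so M is the required complement.\<close>

lemma (in module) subspace_Union_chain:
  assumes "C \<noteq> {}" and "chain\<^sub>\<subseteq> C" and "\<And>X. X \<in> C \<Longrightarrow> subspace X"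
  shows "subspace (\<Union>C)"
proof (rule subspaceI)
  show "0 \<in> \<Union>C" using assms(1,3) subspace_0 by blast
next
  fix x y assume "x \<in> \<Union>C" "y \<in> \<Union>C"
  then obtain X Y where "X \<in> C" "Y \<in> C" "x \<in> X" "y \<in> Y" by blast
  with \<open>chain\<^sub>\<subseteq> C\<close> obtain Z where "Z \<in> C" "x \<in> Z" "y \<in> Z"
    unfolding chain_subset_def by blast
  then show "x + y \<in> \<Union>C" using assms(3) subspace_add by blast
next
  fix c x assume "x \<in> \<Union>C"
  then show "c *s x \<in> \<Union>C" using assms(3) subspace_scale by blast
qed

locale filtration = vector_space scale
  for scale :: "'k::field \<Rightarrow> 'v::ab_group_add \<Rightarrow> 'v" (infixr \<open>*s\<close> 75) +
  fixes ell :: "'v \<Rightarrow> ereal"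
  assumes ell_eq_minf_iff: "ell v = - \<infinity> \<longleftrightarrow> v = 0"
    and ell_scale: "c \<noteq> 0 \<Longrightarrow> ell (c *s v) = ell v"
    and ell_add_le_max: "ell (v + w) \<le> max (ell v) (ell w)"

lemma filtration_if_filtered_vector_space:
  "filtered_vector_space scale ell \<Longrightarrow> filtration scale ell"
  by (simp add: filtered_vector_space_def filtration_def filtration_axioms_def)

context filtration
begin

lemma ell_zero [simp]: "ell 0 = - \<infinity>"
  by (simp add: ell_eq_minf_iff)

lemma ell_uminus [simp]: "ell (- v) = ell v"
  using ell_scale[of "- 1" v] by (simp add: scale_minus_left)

lemma ell_add_eq_max_if_neq:
  assumes "ell v \<noteq> ell w"
  shows "ell (v + w) = max (ell v) (ell w)"
proof -
  have dominant: "ell (a + b) = ell a" if "ell b < ell a" for a b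
  proof (rule antisym)
    show "ell (a + b) \<le> ell a" using ell_add_le_max[of a b] that by simp
    have "ell a \<le> max (ell (a + b)) (ell (- b))" using ell_add_le_max[of "a + b" "- b"] by simp
    then show "ell a \<le> ell (a + b)" using that by (auto simp: max_def split: if_splits)
  qed
  from assms consider "ell w < ell v" | "ell v < ell w" by fastforce
  then show ?thesis
    by cases (use dominant[of w v] dominant[of v w] in \<open>simp_all add: add.commute max_def\<close>)
qed

definition ell_orthogonal :: "'v set \<Rightarrow> 'v set \<Rightarrow> bool" where
  "ell_orthogonal A B \<longleftrightarrow> (\<forall>a\<in>A. \<forall>b\<in>B. ell (a + b) = max (ell a) (ell b))"

lemma ell_orthogonal_Int_eq_zero:
  assumes "subspace A" "0 \<in> B" "ell_orthogonal A B"
  shows "A \<inter> B = {0}"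
proof -
  have "a = 0" if "a \<in> A" "a \<in> B" for a
  proof -
    have "- a \<in> A" using assms(1) that(1) by (rule subspace_neg)
    then have "ell 0 = max (ell (- a)) (ell a)"
      using assms(3) that(2) unfolding ell_orthogonal_def by (metis add.left_inverse)
    then show "a = 0" by (simp add: ell_eq_minf_iff[symmetric])
  qed
  then show ?thesis using assms(1,2) subspace_0 by blast
qed

lemma ell_orthogonal_span_singleton:
  assumes U: "subspace U" and best: "\<And>u. u \<in> U \<Longrightarrow> ell y \<le> ell (y - u)"
  shows "ell_orthogonal U (span {y})"
  unfolding ell_orthogonal_def span_singleton
proof (intro ballI, elim rangeE)
  fix u z c assume u: "u \<in> U" and z: "z = c *s y"
  show "ell (u + z) = max (ell u) (ell z)"
  proof (cases "c = 0 \<or> ell u \<noteq> ell z")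
    case True
    then show ?thesis using z ell_add_eq_max_if_neq by auto
  next
    case False
    have "ell y \<le> ell (y - (- inverse c) *s u)" using best subspace_scale[OF U u] by blast
    also have "\<dots> = ell (c *s (y - (- inverse c) *s u))" using False by (intro ell_scale[symmetric]) simp
    also have "c *s (y - (- inverse c) *s u) = u + z"
      using False z by (simp add: scale_right_diff_distrib scale_right_distrib add.commute)
    finally have "ell y \<le> ell (u + z)" .
    moreover have "ell (u + z) \<le> ell y" using ell_add_le_max[of u z] False z by (simp add: ell_scale)
    ultimately show ?thesis using False z by (simp add: ell_scale)
  qed
qed

lemma exists_ell_orthogonal_line:
  assumes "best_approximation_property scale ell" "subspace U" "U \<noteq> UNIV"
  shows "\<exists>y. y \<notin> U \<and> ell_orthogonal U (span {y})"
proof -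
  obtain v where v: "v \<notin> U" using assms(3) by blast
  with assms obtain u0 where u0: "u0 \<in> U" and min: "\<And>u. u \<in> U \<Longrightarrow> ell (v - u0) \<le> ell (v - u)"
    unfolding best_approximation_property_def by blast
  have "v - u0 \<notin> U" using v u0 assms(2) by (metis diff_add_cancel subspace_add)
  moreover have "ell (v - u0) \<le> ell (v - u0 - u)" if "u \<in> U" for u
    using min[of "u0 + u"] subspace_add[OF assms(2) u0 that] by (simp add: diff_diff_eq)
  ultimately show ?thesis using ell_orthogonal_span_singleton[OF assms(2)] by blast
qed

lemma ell_orthogonal_sum:
  assumes "0 \<in> W" "ell_orthogonal W M" "ell_orthogonal {w + m |w m. w \<in> W \<and> m \<in> M} Y"
  shows "ell_orthogonal W {m + y |m y. m \<in> M \<and> y \<in> Y}"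
  unfolding ell_orthogonal_def
proof (intro ballI, elim CollectE exE conjE)
  fix w x m y assume w: "w \<in> W" and x: "x = m + y" and m: "m \<in> M" and y: "y \<in> Y"
  have sum: "ell (a + m + y) = max (ell (a + m)) (ell y)" if "a \<in> W" for a
    using assms(3) that m y unfolding ell_orthogonal_def by blast
  have "ell (w + x) = max (ell (w + m)) (ell y)" using sum[OF w] x by (simp add: add.assoc)
  moreover have "ell x = max (ell m) (ell y)" using sum[OF assms(1)] x by simp
  ultimately show "ell (w + x) = max (ell w) (ell x)"
    using assms(2) w m unfolding ell_orthogonal_def by (simp add: max.assoc)
qed

lemma exists_maximal_ell_orthogonal_subspace:
  assumes "subspace W"
  shows "\<exists>M. subspace M \<and> ell_orthogonal W M \<and>
           (\<forall>X. subspace X \<and> ell_orthogonal W X \<and> M \<subseteq> X \<longrightarrow> X = M)"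
proof -
  let ?A = "{X. subspace X \<and> ell_orthogonal W X}"
  have "{0} \<in> ?A" by (simp add: ell_orthogonal_def)
  moreover have "\<Union>C \<in> ?A" if "C \<noteq> {}" "subset.chain ?A C" for C
  proof -
    have "chain\<^sub>\<subseteq> C" "C \<subseteq> ?A" using that(2) by (auto simp: chain_subset_alt_def subset.chain_def)
    then show ?thesis
      using subspace_Union_chain[OF that(1)] by (auto simp: ell_orthogonal_def)
  qed
  ultimately show ?thesis using subset_Zorn_nonempty[of ?A] by blast
qed

lemma sum_eq_UNIV_if_maximal_ell_orthogonal:
  assumes bap: "best_approximation_property scale ell"
    and W: "subspace W" and M: "subspace M" and orth: "ell_orthogonal W M"
    and max: "\<And>X. subspace X \<Longrightarrow> ell_orthogonal W X \<Longrightarrow> M \<subseteq> X \<Longrightarrow> X = M"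
  shows "{w + m |w m. w \<in> W \<and> m \<in> M} = UNIV" (is "?U = UNIV")
proof (rule ccontr)
  assume "?U \<noteq> UNIV"
  then obtain y where y: "y \<notin> ?U" and "ell_orthogonal ?U (span {y})"
    using exists_ell_orthogonal_line[OF bap subspace_sums[OF W M]] by blast
  define X where "X = {m + z |m z. m \<in> M \<and> z \<in> span {y}}"
  have "ell_orthogonal W X"
    unfolding X_def by (rule ell_orthogonal_sum) (use W subspace_0 orth \<open>ell_orthogonal ?U _\<close> in auto)
  moreover have "M \<subseteq> X" unfolding X_def by (force intro: span_zero)
  ultimately have "X = M" using max subspace_sums[OF M subspace_span] X_def by blast
  moreover have "y \<in> X" unfolding X_def using M subspace_0 span_base by force
  ultimately show False using y W subspace_0 by force
qed

end

theorem corollary3p9: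
  fixes scale :: "'k::field \<Rightarrow> 'v::ab_group_add \<Rightarrow> 'v"
    and ell :: "'v \<Rightarrow> ereal"
  assumes "filtered_vector_space scale ell"
    and "best_approximation_property scale ell"
    and "module.subspace scale W"
  shows "\<exists>X. module.subspace scale X \<and> W \<inter> X = {0} \<and>
             (\<forall>v. \<exists>w\<in>W. \<exists>x\<in>X. v = w + x) \<and>
             (\<forall>w\<in>W. \<forall>x\<in>X. ell (w + x) = max (ell w) (ell x))"
proof -
  interpret filtration scale ell
    using assms(1) by (rule filtration_if_filtered_vector_space)
  obtain M where M: "subspace M" and orth: "ell_orthogonal W M"
    and max: "\<And>X. subspace X \<Longrightarrow> ell_orthogonal W X \<Longrightarrow> M \<subseteq> X \<Longrightarrow> X = M"
    using exists_maximal_ell_orthogonal_subspace[OF assms(3)] by blast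
  have "W \<inter> M = {0}"
    using ell_orthogonal_Int_eq_zero[OF assms(3) subspace_0[OF M] orth] .
  moreover have "\<forall>v. \<exists>w\<in>W. \<exists>x\<in>M. v = w + x"
    using sum_eq_UNIV_if_maximal_ell_orthogonal[OF assms(2,3) M orth max] by blast
  ultimately show ?thesis
    using M orth unfolding ell_orthogonal_def by blast
qed

end
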